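(* Let $G$ be a random $q\times q$ symmetric matrix which is almost surely positive definite, let $F(v)=\mathbb{E}\big[\sqrt{v^{\top}Gv}\big]$, and assume the relevant expectations are finite and differentiation in $v$ commutes with expectation. Then for every $v\in\mathbb{R}^q\setminus\{0\}$ the matrix $\tfrac12\mathrm{Hess}(F^2)(v)$ is positive definite, i.e. $w^{\top}\,\tfrac12\mathrm{Hess}(F^2)(v)\,w>0$ for all $w\in\mathbb{R}^q\setminus\{0\}$.
   Context: In the paper $G=J_f^{\top}J_f$ with $J_f$ the almost surely full rank $D\times q$ Jacobian of a stochastic immersion $f:\mathbb{R}^q\to\mathbb{R}^D$ at a fixed point. $\mathrm{Hess}$ is the Hessian with respect to $v$. *)

theory Defs
  imports "HOL-Probability.Probability"
begin

definition has_hessian :: "(real^'q \<Rightarrow> real) \<Rightarrow> real^'q^'q \<Rightarrow> real^'q \<Rightarrow> bool" where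
  "has_hessian f H v \<longleftrightarrow>
     (\<exists>g. (\<forall>\<^sub>F x in nhds v. (f has_derivative (\<lambda>w. g x \<bullet> w)) (at x)) \<and>
          (g has_derivative (\<lambda>w. H *v w)) (at v))"

definition outer :: "real^'q \<Rightarrow> real^'q \<Rightarrow> real^'q^'q" where
  "outer a b = (\<chi> i j. a $ i * b $ j)"

end

theory Submission
  imports Defs
begin

text \<open>
  With \<open>a = \<nabla>F\<close> and \<open>B = E[Hess \<surd>(v\<^sup>T G v)]\<close> one has \<open>\<onehalf> Hess(F\<^sup>2)(v) = F(v) B + a a\<^sup>T\<close>.
  For a positive definite \<open>A\<close>, the Hessian of \<open>x \<mapsto> \<surd>(x\<^sup>T A x)\<close> at \<open>v\<close> is positive semidefinite
  with kernel exactly the line through \<open>v\<close>: its quadratic form is, up to a positive factor,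
  the Cauchy-Schwarz defect for the inner product defined by \<open>A\<close>. Hence \<open>w\<^sup>T B w > 0\<close> off that line,
  while on it \<open>a \<bullet> v = F(v) > 0\<close> by Euler's relation for the 1-homogeneous \<open>F\<close>.
\<close>

lemma outer_mult_vector: "outer a b *v w = (b \<bullet> w) *\<^sub>R (a::real^'n)"
  by (simp add: outer_def vec_eq_iff matrix_vector_mult_def inner_vec_def sum_distrib_left mult_ac)

lemma symmetric_matrix_inner_commute:
  fixes A :: "real^'n^'n"
  assumes "transpose A = A"
  shows "w \<bullet> (A *v x) = x \<bullet> (A *v w)"
proof -
  have "w \<bullet> (A *v x) = (transpose A *v w) \<bullet> x"
    by (metis dot_lmul_matrix vector_transpose_matrix transpose_transpose)
  then show ?thesis
    using assms by (simp add: inner_commute)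
qed

lemma pos_def_Cauchy_Schwarz_strict:
  fixes A :: "real^'n^'n"
  assumes sym: "transpose A = A" and pd: "\<forall>x. x \<noteq> 0 \<longrightarrow> 0 < x \<bullet> (A *v x)"
    and "v \<noteq> 0" and not_parallel: "\<forall>c. w \<noteq> c *\<^sub>R v"
  shows "(v \<bullet> (A *v w))\<^sup>2 < (v \<bullet> (A *v v)) * (w \<bullet> (A *v w))"
proof -
  define p where "p = v \<bullet> (A *v v)"
  define r where "r = v \<bullet> (A *v w)"
  have "0 < p"
    using pd \<open>v \<noteq> 0\<close> by (simp add: p_def)
  have "w - (r / p) *\<^sub>R v \<noteq> 0"
    using not_parallel by auto
  then have "0 < (w - (r / p) *\<^sub>R v) \<bullet> (A *v (w - (r / p) *\<^sub>R v))"
    using pd by blast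
  also have "\<dots> = w \<bullet> (A *v w) - r\<^sup>2 / p"
    using symmetric_matrix_inner_commute[OF sym, of w v] \<open>0 < p\<close>
    by (simp add: matrix_vector_mult_diff_distrib matrix_vector_mult_scaleR inner_diff_left
        inner_diff_right p_def r_def power2_eq_square field_simps)
  finally show ?thesis
    using \<open>0 < p\<close> by (simp add: p_def r_def field_simps)
qed

definition sqrt_form_grad :: "real^'n^'n \<Rightarrow> real^'n \<Rightarrow> real^'n" where
  "sqrt_form_grad A v = (1 / sqrt (v \<bullet> (A *v v))) *\<^sub>R (A *v v)"

definition sqrt_form_hess :: "real^'n^'n \<Rightarrow> real^'n \<Rightarrow> real^'n^'n" where
  "sqrt_form_hess A v = (1 / sqrt (v \<bullet> (A *v v))) *\<^sub>R A
     - (1 / sqrt (v \<bullet> (A *v v)) ^ 3) *\<^sub>R outer (A *v v) (A *v v)"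

lemma sqrt_form_grad_inner_self:
  assumes "0 \<le> v \<bullet> (A *v v)"
  shows "sqrt_form_grad A v \<bullet> v = sqrt (v \<bullet> (A *v v))"
  using assms by (simp add: sqrt_form_grad_def inner_commute real_div_sqrt)

lemma sqrt_form_hess_quadratic_form:
  fixes A :: "real^'n^'n"
  assumes "transpose A = A" and "0 < v \<bullet> (A *v v)"
  shows "w \<bullet> (sqrt_form_hess A v *v w)
           = ((v \<bullet> (A *v v)) * (w \<bullet> (A *v w)) - (v \<bullet> (A *v w))\<^sup>2) / sqrt (v \<bullet> (A *v v)) ^ 3"
proof -
  define p where "p = v \<bullet> (A *v v)"
  define s where "s = sqrt p"
  have "0 < s" "p = s\<^sup>2"
    using assms(2) by (simp_all add: p_def s_def)
  have "(A *v v) \<bullet> w = v \<bullet> (A *v w)"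
    using symmetric_matrix_inner_commute[OF assms(1), of w v] by (simp add: inner_commute)
  then have "w \<bullet> (sqrt_form_hess A v *v w) = (w \<bullet> (A *v w)) / s - (v \<bullet> (A *v w))\<^sup>2 / s ^ 3"
    unfolding sqrt_form_hess_def p_def[symmetric] s_def[symmetric]
    by (simp add: matrix_vector_mult_diff_rdistrib outer_mult_vector inner_diff_right inner_commute
        power2_eq_square flip: scaleR_matrix_vector_assoc)
  also have "\<dots> = (p * (w \<bullet> (A *v w)) - (v \<bullet> (A *v w))\<^sup>2) / s ^ 3"
    using \<open>0 < s\<close> \<open>p = s\<^sup>2\<close> by (simp add: field_simps power2_eq_square power3_eq_cube)
  finally show ?thesis
    by (simp add: p_def s_def)
qed

lemma sqrt_form_hess_pos:
  fixes A :: "real^'n^'n"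
  assumes "transpose A = A" and "\<forall>x. x \<noteq> 0 \<longrightarrow> 0 < x \<bullet> (A *v x)"
    and "v \<noteq> 0" and "\<forall>c. w \<noteq> c *\<^sub>R v"
  shows "0 < w \<bullet> (sqrt_form_hess A v *v w)"
proof -
  have "0 < v \<bullet> (A *v v)"
    using assms(2,3) by blast
  then show ?thesis
    using sqrt_form_hess_quadratic_form[OF assms(1)] pos_def_Cauchy_Schwarz_strict[OF assms] by simp
qed

lemma sqrt_form_hess_nonneg:
  fixes A :: "real^'n^'n"
  assumes "transpose A = A" and "\<forall>x. x \<noteq> 0 \<longrightarrow> 0 < x \<bullet> (A *v x)" and "v \<noteq> 0"
  shows "0 \<le> w \<bullet> (sqrt_form_hess A v *v w)"
proof (cases "\<exists>c. w = c *\<^sub>R v")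
  case True
  then obtain c where "w = c *\<^sub>R v" by blast
  moreover have "0 < v \<bullet> (A *v v)"
    using assms(2,3) by blast
  then have "v \<bullet> (sqrt_form_hess A v *v v) = 0"
    using sqrt_form_hess_quadratic_form[OF assms(1)] by (simp add: power2_eq_square)
  ultimately show ?thesis
    by (simp add: matrix_vector_mult_scaleR)
next
  case False
  then show ?thesis
    using sqrt_form_hess_pos[OF assms] by (simp add: less_imp_le)
qed

lemma has_hessian_unique:
  assumes "has_hessian f H v" and "has_hessian f H' v"
  shows "H = H'"
proof -
  obtain g where g: "\<forall>\<^sub>F x in nhds v. (f has_derivative (\<lambda>w. g x \<bullet> w)) (at x)"
    and dg: "(g has_derivative (\<lambda>w. H *v w)) (at v)"
    using assms(1) unfolding has_hessian_def by blast
  obtain g' where g': "\<forall>\<^sub>F x in nhds v. (f has_derivative (\<lambda>w. g' x \<bullet> w)) (at x)"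
    and dg': "(g' has_derivative (\<lambda>w. H' *v w)) (at v)"
    using assms(2) unfolding has_hessian_def by blast
  have same_grad: "\<forall>\<^sub>F x in nhds v. g x = g' x"
    using g g'
  proof eventually_elim
    case (elim x)
    then have "(\<lambda>w. g x \<bullet> w) = (\<lambda>w. g' x \<bullet> w)"
      using has_derivative_unique by blast
    then have "(g x - g' x) \<bullet> (g x - g' x) = 0"
      by (metis inner_diff_left inner_diff_right diff_self)
    then show ?case by simp
  qed
  then have "(g' has_derivative (\<lambda>w. H *v w)) (at v)"
    using has_derivative_transform_eventually[OF dg] eventually_nhds_x_imp_x[OF same_grad]
      same_grad by (simp add: eventually_at_filter eventually_mono)
  then have "(\<lambda>w. H *v w) = (\<lambda>w. H' *v w)"
    using dg' has_derivative_unique by blast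
  then show ?thesis
    by (simp add: matrix_eq fun_eq_iff)
qed

lemma has_hessian_power2:
  assumes grad: "\<forall>\<^sub>F x in nhds v. (f has_derivative (\<lambda>w. g x \<bullet> w)) (at x)"
    and hess: "(g has_derivative (\<lambda>w. B *v w)) (at v)"
  shows "has_hessian (\<lambda>x. (f x)\<^sup>2) (2 *\<^sub>R (f v *\<^sub>R B + outer (g v) (g v))) v"
  unfolding has_hessian_def
proof (intro exI conjI)
  show "\<forall>\<^sub>F x in nhds v. ((\<lambda>x. (f x)\<^sup>2) has_derivative (\<lambda>w. ((2 * f x) *\<^sub>R g x) \<bullet> w)) (at x)"
    using grad
  proof eventually_elim
    case (elim x)
    show ?case
      using has_derivative_mult[OF elim elim]
      by (auto elim!: has_derivative_eq_rhs simp: power2_eq_square fun_eq_iff algebra_simps)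
  qed
  have "(f has_derivative (\<lambda>w. g v \<bullet> w)) (at v)"
    using eventually_nhds_x_imp_x[OF grad] .
  then show "((\<lambda>x. (2 * f x) *\<^sub>R g x) has_derivative
      (\<lambda>w. (2 *\<^sub>R (f v *\<^sub>R B + outer (g v) (g v))) *v w)) (at v)"
    by (rule has_derivative_eq_rhs[OF has_derivative_scaleR[OF has_derivative_mult[OF has_derivative_const] hess]])
      (simp add: fun_eq_iff outer_mult_vector matrix_vector_mult_add_rdistrib algebra_simps
        flip: scaleR_matrix_vector_assoc)
qed

lemma half_power2_hessian_quadratic_form:
  "w \<bullet> (((1/2) *\<^sub>R (2 *\<^sub>R (c *\<^sub>R B + outer a a))) *v w) = c * (w \<bullet> (B *v w)) + (a \<bullet> w)\<^sup>2"
  by (simp add: outer_mult_vector matrix_vector_mult_add_rdistrib inner_add_right power2_eq_square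
      inner_commute[of w] flip: scaleR_matrix_vector_assoc)

lemma (in prob_space) integral_pos_AE:
  fixes f :: "'a \<Rightarrow> real"
  assumes "integrable M f" and pos: "AE x in M. 0 < f x"
  shows "0 < integral\<^sup>L M f"
proof -
  have nonneg: "AE x in M. 0 \<le> f x"
    using pos by eventually_elim simp
  have "\<not> (AE x in M. f x = 0)"
  proof
    assume "AE x in M. f x = 0"
    with pos have "AE x in M. False"
      by eventually_elim simp
    then show False
      by simp
  qed
  then show ?thesis
    using integral_nonneg_AE[OF nonneg] integral_nonneg_eq_0_iff_AE[OF assms(1) nonneg] by linarith
qed

lemma bounded_linear_quadratic_form: "bounded_linear (\<lambda>A::real^'n^'n. w \<bullet> (A *v w))"
  unfolding linear_conv_bounded_linear[symmetric]
  by (rule linearI) (simp_all add: matrix_vector_mult_add_rdistrib inner_add_right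
      flip: scaleR_matrix_vector_assoc)

lemma (in prob_space) expected_sqrt_form_hess_nonneg:
  assumes pd: "AE \<omega> in M. transpose (G \<omega>) = G \<omega> \<and> (\<forall>x. x \<noteq> 0 \<longrightarrow> 0 < x \<bullet> (G \<omega> *v x))"
    and int: "integrable M (\<lambda>\<omega>. sqrt_form_hess (G \<omega>) v)" and "v \<noteq> 0"
  shows "0 \<le> w \<bullet> ((\<integral>\<omega>. sqrt_form_hess (G \<omega>) v \<partial>M) *v w)"
proof -
  have "AE \<omega> in M. 0 \<le> w \<bullet> (sqrt_form_hess (G \<omega>) v *v w)"
    using pd by eventually_elim (use sqrt_form_hess_nonneg \<open>v \<noteq> 0\<close> in blast)
  then show ?thesis
    using integral_nonneg_AE integral_bounded_linear[OF bounded_linear_quadratic_form[of w] int]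
    by metis
qed

lemma (in prob_space) expected_sqrt_form_hess_pos:
  assumes pd: "AE \<omega> in M. transpose (G \<omega>) = G \<omega> \<and> (\<forall>x. x \<noteq> 0 \<longrightarrow> 0 < x \<bullet> (G \<omega> *v x))"
    and int: "integrable M (\<lambda>\<omega>. sqrt_form_hess (G \<omega>) v)"
    and "v \<noteq> 0" and "\<forall>c. w \<noteq> c *\<^sub>R v"
  shows "0 < w \<bullet> ((\<integral>\<omega>. sqrt_form_hess (G \<omega>) v \<partial>M) *v w)"
proof -
  have "AE \<omega> in M. 0 < w \<bullet> (sqrt_form_hess (G \<omega>) v *v w)"
    using pd by eventually_elim (use sqrt_form_hess_pos assms(3,4) in blast)
  then show ?thesis
    using integral_pos_AE[OF integrable_bounded_linear[OF bounded_linear_quadratic_form[of w] int]]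
      integral_bounded_linear[OF bounded_linear_quadratic_form[of w] int] by simp
qed

lemma (in prob_space) expected_sqrt_form_grad_inner_self:
  assumes psd: "AE \<omega> in M. 0 \<le> v \<bullet> (G \<omega> *v v)"
    and int_grad: "integrable M (\<lambda>\<omega>. sqrt_form_grad (G \<omega>) v)"
    and int_sqrt: "integrable M (\<lambda>\<omega>. sqrt (v \<bullet> (G \<omega> *v v)))"
  shows "(\<integral>\<omega>. sqrt_form_grad (G \<omega>) v \<partial>M) \<bullet> v = (\<integral>\<omega>. sqrt (v \<bullet> (G \<omega> *v v)) \<partial>M)"
proof -
  have "(\<integral>\<omega>. sqrt_form_grad (G \<omega>) v \<partial>M) \<bullet> v = (\<integral>\<omega>. sqrt_form_grad (G \<omega>) v \<bullet> v \<partial>M)"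
    using integral_bounded_linear[OF bounded_linear_inner_left int_grad] by simp
  also have "\<dots> = (\<integral>\<omega>. sqrt (v \<bullet> (G \<omega> *v v)) \<partial>M)"
    using integrable_bounded_linear[OF bounded_linear_inner_left int_grad] int_sqrt
    by (intro integral_cong_AE) (auto intro: AE_mp[OF psd] simp: sqrt_form_grad_inner_self)
  finally show ?thesis .
qed

lemma (in prob_space) expected_sqrt_form_power2_hessian_pos:
  assumes pd: "AE \<omega> in M. transpose (G \<omega>) = G \<omega> \<and> (\<forall>x. x \<noteq> 0 \<longrightarrow> 0 < x \<bullet> (G \<omega> *v x))"
    and int_sqrt: "integrable M (\<lambda>\<omega>. sqrt (v \<bullet> (G \<omega> *v v)))"
    and int_grad: "integrable M (\<lambda>\<omega>. sqrt_form_grad (G \<omega>) v)"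
    and int_hess: "integrable M (\<lambda>\<omega>. sqrt_form_hess (G \<omega>) v)"
    and "v \<noteq> 0" and "w \<noteq> 0"
  shows "0 < (\<integral>\<omega>. sqrt (v \<bullet> (G \<omega> *v v)) \<partial>M) * (w \<bullet> ((\<integral>\<omega>. sqrt_form_hess (G \<omega>) v \<partial>M) *v w))
             + ((\<integral>\<omega>. sqrt_form_grad (G \<omega>) v \<partial>M) \<bullet> w)\<^sup>2"
    (is "0 < ?F * ?Bw + (?a \<bullet> w)\<^sup>2")
proof -
  have pd_v: "AE \<omega> in M. 0 < v \<bullet> (G \<omega> *v v)"
    using pd by eventually_elim (use \<open>v \<noteq> 0\<close> in blast)
  then have "0 < ?F"
    using int_sqrt by (intro integral_pos_AE) (auto elim: AE_mp)
  show ?thesis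
  proof (cases "\<exists>c. w = c *\<^sub>R v")
    case True
    then obtain c where "w = c *\<^sub>R v" and "c \<noteq> 0"
      using \<open>w \<noteq> 0\<close> by auto
    moreover have "?a \<bullet> v = ?F"
      using pd_v int_grad int_sqrt
      by (intro expected_sqrt_form_grad_inner_self) (auto elim: AE_mp)
    ultimately have "0 < (?a \<bullet> w)\<^sup>2"
      using \<open>0 < ?F\<close> by simp
    moreover have "0 \<le> ?Bw"
      using expected_sqrt_form_hess_nonneg[OF pd int_hess \<open>v \<noteq> 0\<close>] .
    ultimately show ?thesis
      using \<open>0 < ?F\<close> by (simp add: add_nonneg_pos)
  next
    case False
    then have "0 < ?Bw"
      using expected_sqrt_form_hess_pos[OF pd int_hess \<open>v \<noteq> 0\<close>] by simp
    then show ?thesis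
      using \<open>0 < ?F\<close> by (simp add: add_pos_nonneg)
  qed
qed

theorem mainTheorem3:
  fixes M :: "'a measure" and G :: "'a \<Rightarrow> real^'q^'q" and F :: "real^'q \<Rightarrow> real"
  assumes prob: "prob_space M"
    and G_meas: "G \<in> borel_measurable M"
    and G_sym_pd: "AE \<omega> in M. transpose (G \<omega>) = G \<omega> \<and>
                      (\<forall>x. x \<noteq> 0 \<longrightarrow> x \<bullet> (G \<omega> *v x) > 0)"
    and F_def: "\<And>x. F x = (\<integral>\<omega>. sqrt (x \<bullet> (G \<omega> *v x)) \<partial>M)"
    \<comment> \<open>finiteness of the relevant expectations\<close>
    and int0: "\<And>x. x \<noteq> 0 \<Longrightarrow> integrable M (\<lambda>\<omega>. sqrt (x \<bullet> (G \<omega> *v x)))"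
    and int1: "\<And>x. x \<noteq> 0 \<Longrightarrow>
                 integrable M (\<lambda>\<omega>. (1 / sqrt (x \<bullet> (G \<omega> *v x))) *\<^sub>R (G \<omega> *v x))"
    and int2: "\<And>x. x \<noteq> 0 \<Longrightarrow>
                 integrable M (\<lambda>\<omega>. (1 / sqrt (x \<bullet> (G \<omega> *v x))) *\<^sub>R G \<omega>
                    - (1 / sqrt (x \<bullet> (G \<omega> *v x)) ^ 3) *\<^sub>R outer (G \<omega> *v x) (G \<omega> *v x))"
    \<comment> \<open>differentiation in v commutes with expectation (first and second order)\<close>
    and diff1: "\<And>x. x \<noteq> 0 \<Longrightarrow>
                 (F has_derivative (\<lambda>w. (\<integral>\<omega>. (1 / sqrt (x \<bullet> (G \<omega> *v x))) *\<^sub>R (G \<omega> *v x) \<partial>M) \<bullet> w)) (at x)"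
    and diff2: "\<And>x. x \<noteq> 0 \<Longrightarrow>
                 ((\<lambda>y. \<integral>\<omega>. (1 / sqrt (y \<bullet> (G \<omega> *v y))) *\<^sub>R (G \<omega> *v y) \<partial>M) has_derivative
                   (\<lambda>w. (\<integral>\<omega>. (1 / sqrt (x \<bullet> (G \<omega> *v x))) *\<^sub>R G \<omega>
                    - (1 / sqrt (x \<bullet> (G \<omega> *v x)) ^ 3) *\<^sub>R outer (G \<omega> *v x) (G \<omega> *v x) \<partial>M) *v w)) (at x)"
    and v_ne: "v \<noteq> 0"
  shows "(\<exists>H. has_hessian (\<lambda>x. (F x)\<^sup>2) H v) \<and>
         (\<forall>H. has_hessian (\<lambda>x. (F x)\<^sup>2) H v \<longrightarrow>
              (\<forall>w. w \<noteq> 0 \<longrightarrow> w \<bullet> (((1/2) *\<^sub>R H) *v w) > 0))"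
proof -
  interpret prob_space M by (rule prob)
  define a where "a x = (\<integral>\<omega>. sqrt_form_grad (G \<omega>) x \<partial>M)" for x
  define B where "B = (\<integral>\<omega>. sqrt_form_hess (G \<omega>) v \<partial>M)"
  define H where "H = 2 *\<^sub>R (F v *\<^sub>R B + outer (a v) (a v))"
  have "has_hessian (\<lambda>x. (F x)\<^sup>2) H v"
    unfolding H_def
  proof (rule has_hessian_power2)
    show "\<forall>\<^sub>F x in nhds v. (F has_derivative (\<lambda>w. a x \<bullet> w)) (at x)"
      using t1_space_nhds[OF v_ne] by eventually_elim (simp add: a_def sqrt_form_grad_def diff1)
    show "(a has_derivative (\<lambda>w. B *v w)) (at v)"
      unfolding a_def[abs_def] B_def sqrt_form_grad_def sqrt_form_hess_def using diff2[OF v_ne] .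
  qed
  moreover have "0 < w \<bullet> ((1/2) *\<^sub>R H *v w)" if "w \<noteq> 0" for w
    unfolding H_def half_power2_hessian_quadratic_form F_def a_def B_def
    using G_sym_pd int0[OF v_ne] int1[OF v_ne] int2[OF v_ne] v_ne \<open>w \<noteq> 0\<close>
    by (intro expected_sqrt_form_power2_hessian_pos) (simp_all add: sqrt_form_grad_def sqrt_form_hess_def)
  ultimately show ?thesis
    using has_hessian_unique by blast
qed

end
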